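(* Let $f \colon \mathbb{R}^n \to \mathbb{R}$ and $g \colon \mathbb{R}^n \to \mathbb{R}^m$ be continuously differentiable, let $X \subseteq \mathbb{R}^m$ be nonempty and closed, let $\rho>0$, and let $p^\rho(y)=\sum_{i=1}^n p_i^\rho(y_i)$ where each $p_i^\rho$ satisfies (P.1)–(P.3) below. Let $\varepsilon>0$ be such that there exists $t^*>0$ with $(p_i^\rho)'(t^* )>\varepsilon$ for every $i=1,\dots,n$. Let $\{\alpha_k\}\subset(0,\infty)$ and let $\{(x^k,y^k)\}\subset\mathbb{R}^n\times\mathbb{R}^n$, $\{z^k\}\subset\mathbb{R}^m$ be sequences with $$g(x^k)+z^k\in X,\qquad z^k\in B_\varepsilon(0),\qquad y^k\ge 0,$$ and assume there are $\lambda^k\in N^{\lim}_X(g(x^k)+z^k)$ and $\gamma^k\in N_{\ge0}(y^k)$ such that $$\begin{pmatrix} -\nabla f(x^k) - \alpha_k\, y^k\circ\partial(|x^k|) - g'(x^k)^T\lambda^k\\ -\nabla p^\rho(y^k) - \alpha_k|x^k| + \sum_{i\in I_0(y^k)}\gamma_i^k e_i\end{pmatrix} \in B_\varepsilon(0)\times B_\varepsilon(0)$$ (i.e. for some element of $y^k\circ\partial(|x^k|)$ the first block lies in $B_\varepsilon(0)$ and the second block lies in $B_\varepsilon(0)$). If $\alpha_k\to\infty$, then $|x^k|\circ y^k\to 0$.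
   Context: Conditions on each $p_i^\rho\colon\mathbb{R}\to\mathbb{R}$: (P.1) convex with a unique minimizer $s_i^\rho>0$; (P.2) $p_i^\rho(0)-p_i^\rho(s_i^\rho)=\rho$; (P.3) continuously differentiable. Notation: $B_\varepsilon(0)$ is the closed Euclidean ball of radius $\varepsilon$ around $0$ (in the appropriate dimension); $I_0(y)=\{i: y_i=0\}$; $|x|=(|x_1|,\dots,|x_n|)^T$; $\circ$ the componentwise product; $e_i$ the $i$-th unit vector; $g'(x)$ the Jacobian of $g$; $N^{\lim}_X$ the limiting (Mordukhovich) normal cone to $X$; $N_{\ge0}(y)=\{\gamma\in\mathbb{R}^n : \gamma^T(z-y)\le 0\ \forall z\ge 0\}$, i.e. $\gamma_i\le 0$ and $\gamma_iy_i=0$ for all $i$; $y\circ\partial(|x|)=\{y\circ s: s_i=\operatorname{sign}(x_i)\text{ if }x_i\neq0,\ s_i\in[-1,1]\text{ if }x_i=0\}$. *)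

theory Defs
  imports "HOL-Analysis.Analysis"
begin

definition frechet_normal_cone :: "('a::euclidean_space) set \<Rightarrow> 'a \<Rightarrow> 'a set" where
  "frechet_normal_cone X xb =
     (if xb \<in> X then
        {v. \<forall>e>0. \<exists>d>0. \<forall>x\<in>X. norm (x - xb) < d \<longrightarrow> inner v (x - xb) \<le> e * norm (x - xb)}
      else {})"

definition limiting_normal_cone :: "('a::euclidean_space) set \<Rightarrow> 'a \<Rightarrow> 'a set" where
  "limiting_normal_cone X xb =
     {v. \<exists>xs vs. (\<forall>k. xs k \<in> X \<and> vs k \<in> frechet_normal_cone X (xs k))
                 \<and> xs \<longlonglongrightarrow> xb \<and> vs \<longlonglongrightarrow> v}"

definition normal_cone_nonneg :: "real^'n \<Rightarrow> (real^'n) set" where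
  "normal_cone_nonneg y = {gam. \<forall>z. (\<forall>i. z $ i \<ge> 0) \<longrightarrow> inner gam (z - y) \<le> 0}"

definition y_circ_subdiff_abs :: "real^'n \<Rightarrow> real^'n \<Rightarrow> (real^'n) set" where
  "y_circ_subdiff_abs y x =
     {(\<chi> i. y $ i * s $ i) | s. \<forall>i. (x $ i \<noteq> 0 \<longrightarrow> s $ i = sgn (x $ i))
                               \<and> (x $ i = 0 \<longrightarrow> -1 \<le> s $ i \<and> s $ i \<le> 1)}"

end

theory Submission
  imports Defs
begin

text \<open>For \<open>y\<^sub>i > 0\<close> it reads
  \<open>\<bar>p\<^sub>i'(y\<^sub>i) + \<alpha>\<^sub>k \<bar>x\<^sub>i\<bar>\<bar> \<le> \<epsilon>\<close>. Since \<open>p\<^sub>i'\<close> is nondecreasing and \<open>\<alpha>\<^sub>k \<bar>x\<^sub>i\<bar> \<ge> 0\<close>, this forces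
  \<open>y\<^sub>i \<le> t\<^sup>*\<close> and \<open>\<alpha>\<^sub>k \<bar>x\<^sub>i\<bar> \<le> \<epsilon> + \<bar>p\<^sub>i'(0)\<bar>\<close>.
  As the product vanishes when \<open>y\<^sub>i = 0\<close>, always \<open>\<bar>x\<^sub>i\<bar> y\<^sub>i \<le> t\<^sup>* (\<epsilon> + \<bar>p\<^sub>i'(0)\<bar>) / \<alpha>\<^sub>k \<rightarrow> 0\<close>.\<close>

lemma convex_on_derivative_mono:
  fixes q dq :: "real \<Rightarrow> real"
  assumes convex: "convex_on UNIV q" and deriv: "\<And>t. (q has_real_derivative dq t) (at t)"
  shows "mono dq"
proof (rule monoI)
  fix a b :: real
  assume "a \<le> b"
  have "q b - q a \<ge> dq a * (b - a)" "q a - q b \<ge> dq b * (a - b)"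
    by (rule convex_on_imp_above_tangent[OF convex]; simp add: deriv)+
  then have "dq a * (b - a) \<le> dq b * (b - a)" by (simp add: algebra_simps)
  with \<open>a \<le> b\<close> show "dq a \<le> dq b"
    by (cases "a = b") simp_all
qed

lemma abs_mult_le_of_stationary:
  fixes dq :: "real \<Rightarrow> real"
  assumes "mono dq" and "dq t > \<epsilon>"
    and "a > 0" and "y > 0" and stationary: "\<bar>dq y + a * \<bar>u\<bar>\<bar> \<le> \<epsilon>"
  shows "\<bar>u\<bar> * y \<le> t * (\<epsilon> + \<bar>dq 0\<bar>) / a"
proof -
  have "a * \<bar>u\<bar> \<ge> 0" using \<open>a > 0\<close> by simp
  have "y \<le> t"
  proof (rule ccontr)
    assume "\<not> y \<le> t"
    then have "dq t \<le> dq y" using \<open>mono dq\<close> by (simp add: monoD)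
    with stationary \<open>dq t > \<epsilon>\<close> \<open>a * \<bar>u\<bar> \<ge> 0\<close> show False by linarith
  qed
  have "dq 0 \<le> dq y" using \<open>mono dq\<close> \<open>y > 0\<close> by (simp add: monoD)
  with stationary have "a * \<bar>u\<bar> \<le> \<epsilon> + \<bar>dq 0\<bar>" by linarith
  then have "\<bar>u\<bar> \<le> (\<epsilon> + \<bar>dq 0\<bar>) / a" using \<open>a > 0\<close> by (simp add: field_simps)
  then have "\<bar>u\<bar> * y \<le> (\<epsilon> + \<bar>dq 0\<bar>) / a * t"
    using \<open>y \<le> t\<close> \<open>y > 0\<close> by (intro mult_mono) auto
  then show ?thesis by (simp add: mult.commute)
qed

lemma tendsto_zero_if_le_divide_at_top:
  fixes u \<alpha> :: "'a \<Rightarrow> real"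
  assumes "\<And>k. 0 \<le> u k" "\<And>k. u k \<le> C / \<alpha> k" and "filterlim \<alpha> at_top F"
  shows "(u \<longlongrightarrow> 0) F"
proof (rule tendsto_sandwich[OF _ _ tendsto_const])
  show "((\<lambda>k. C / \<alpha> k) \<longlongrightarrow> 0) F"
    using tendsto_mult_right_zero[OF tendsto_inverse_0_at_top[OF \<open>filterlim \<alpha> at_top F\<close>]]
    by (simp add: divide_inverse)
qed (use assms in auto)

theorem mainTheorem5:
  fixes f :: "real^'n \<Rightarrow> real" and Df :: "real^'n \<Rightarrow> real^'n"
    and g :: "real^'n \<Rightarrow> real^'m" and Jg :: "real^'n \<Rightarrow> real^'n^'m"
    and X :: "(real^'m) set" and \<rho> :: real
    and p :: "'n \<Rightarrow> real \<Rightarrow> real" and dp :: "'n \<Rightarrow> real \<Rightarrow> real"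
    and \<epsilon> :: real and \<alpha> :: "nat \<Rightarrow> real"
    and x y :: "nat \<Rightarrow> real^'n" and z :: "nat \<Rightarrow> real^'m"
  assumes f_C1: "\<And>u. (f has_derivative (\<lambda>h. Df u \<bullet> h)) (at u)" "continuous_on UNIV Df"
    and g_C1: "\<And>u. (g has_derivative (\<lambda>h. Jg u *v h)) (at u)" "continuous_on UNIV Jg"
    and X: "X \<noteq> {}" "closed X"
    and rho: "\<rho> > 0"
    and P1_convex: "\<And>i. convex_on UNIV (p i)"
    and P1_unique_min: "\<And>i. \<exists>s>0. (\<forall>t. p i s \<le> p i t) \<and> (\<forall>t. p i t \<le> p i s \<longrightarrow> t = s)
                                     \<and> p i 0 - p i s = \<rho>"
    and P3: "\<And>i t. (p i has_real_derivative dp i t) (at t)" "\<And>i. continuous_on UNIV (dp i)"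
    and eps: "\<epsilon> > 0" "\<exists>t>0. \<forall>i. dp i t > \<epsilon>"
    and alpha_pos: "\<And>k. \<alpha> k > 0"
    and feas: "\<And>k. g (x k) + z k \<in> X" "\<And>k. norm (z k) \<le> \<epsilon>" "\<And>k i. y k $ i \<ge> 0"
    and stat: "\<And>k. \<exists>lam gam w.
        lam \<in> limiting_normal_cone X (g (x k) + z k) \<and>
        gam \<in> normal_cone_nonneg (y k) \<and>
        w \<in> y_circ_subdiff_abs (y k) (x k) \<and>
        norm (- Df (x k) - \<alpha> k *\<^sub>R w - transpose (Jg (x k)) *v lam) \<le> \<epsilon> \<and>
        norm (- (\<chi> i. dp i (y k $ i)) - \<alpha> k *\<^sub>R (\<chi> i. \<bar>x k $ i\<bar>)
              + (\<Sum>i\<in>{i. y k $ i = 0}. gam $ i *\<^sub>R axis i 1)) \<le> \<epsilon>"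
    and alpha_lim: "filterlim \<alpha> at_top sequentially"
  shows "(\<lambda>k. \<chi> i. \<bar>x k $ i\<bar> * y k $ i) \<longlonglongrightarrow> 0"
proof -
  obtain t where t: "t > 0" "\<And>i. dp i t > \<epsilon>" using eps(2) by blast
  have bound: "\<bar>x k $ i\<bar> * y k $ i \<le> t * (\<epsilon> + \<bar>dp i 0\<bar>) / \<alpha> k" for k i
  proof (cases "y k $ i = 0")
    case True
    then show ?thesis using t(1) eps(1) alpha_pos[of k] by simp
  next
    case False
    obtain gam where "norm (- (\<chi> i. dp i (y k $ i)) - \<alpha> k *\<^sub>R (\<chi> i. \<bar>x k $ i\<bar>)
        + (\<Sum>i\<in>{i. y k $ i = 0}. gam $ i *\<^sub>R axis i 1)) \<le> \<epsilon>"
      using stat[of k] by blast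
    then have "\<bar>(- (\<chi> i. dp i (y k $ i)) - \<alpha> k *\<^sub>R (\<chi> i. \<bar>x k $ i\<bar>)
        + (\<Sum>i\<in>{i. y k $ i = 0}. gam $ i *\<^sub>R axis i 1)) $ i\<bar> \<le> \<epsilon>"
      using component_le_norm_cart order_trans by blast
    then have "\<bar>dp i (y k $ i) + \<alpha> k * \<bar>x k $ i\<bar>\<bar> \<le> \<epsilon>"
      using False by (simp add: axis_def abs_minus_commute if_distrib cong: if_cong)
    moreover have "y k $ i > 0" using False feas(3)[of k i] by simp
    ultimately show ?thesis
      using abs_mult_le_of_stationary convex_on_derivative_mono[OF P1_convex P3(1)] t alpha_pos
      by blast
  qed
  have "(\<lambda>k. \<chi> i. \<bar>x k $ i\<bar> * y k $ i) \<longlonglongrightarrow> (\<chi> i. 0)"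
    using bound feas(3) alpha_lim by (intro tendsto_vec_lambda tendsto_zero_if_le_divide_at_top) auto
  then show ?thesis by (simp add: zero_vec_def)
qed

end
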